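(* Let $N\ge2$, $d\ge1$, $E,S\subset\mathbb{Z}_N^d$ with $$|E|\cdot|S|<\frac{N^d}{4}.$$ Let $1_E$ be the indicator function of $E$, let $r(x)=\sum_{m\notin S}\chi(x\cdot m)\widehat{1_E}(m)$, and let $G(x)=1$ if $|r(x)|\ge 1/2$ and $G(x)=0$ otherwise. Then $G(x)=1_E(x)$ for all $x\in\mathbb{Z}_N^d$ (i.e., $E$ is recovered by the Direct Rounding Algorithm).
   Context: $\chi(t)=e^{2\pi i t/N}$ for $t\in\mathbb{Z}_N$, $x\cdot m=\sum_i x_im_i$ mod $N$, and $\widehat{1_E}(m)=N^{-d}\sum_{x\in E}\chi(-x\cdot m)$. Thus $r$ is the inverse Fourier transform of $\widehat{1_E}$ with the frequencies in $S$ set to zero. *)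

theory Defs
  imports "HOL-Analysis.Analysis"
begin

definition ZNd :: "nat \<Rightarrow> nat \<Rightarrow> (nat \<Rightarrow> nat) set" where
  "ZNd N d = {x. (\<forall>i<d. x i < N) \<and> (\<forall>i\<ge>d. x i = 0)}"

definition dotN :: "nat \<Rightarrow> nat \<Rightarrow> (nat \<Rightarrow> nat) \<Rightarrow> (nat \<Rightarrow> nat) \<Rightarrow> int" where
  "dotN N d x m = int ((\<Sum>i<d. x i * m i) mod N)"

definition chi :: "nat \<Rightarrow> int \<Rightarrow> complex" where
  "chi N t = exp (2 * pi * \<i> * of_int t / of_nat N)"

definition indic :: "'a set \<Rightarrow> 'a \<Rightarrow> complex" where
  "indic E x = (if x \<in> E then 1 else 0)"

definition fourier_indic :: "nat \<Rightarrow> nat \<Rightarrow> (nat \<Rightarrow> nat) set \<Rightarrow> (nat \<Rightarrow> nat) \<Rightarrow> complex" where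
  "fourier_indic N d E m = (1 / of_nat N ^ d) * (\<Sum>x\<in>E. chi N (- dotN N d x m))"

definition rec_r :: "nat \<Rightarrow> nat \<Rightarrow> (nat \<Rightarrow> nat) set \<Rightarrow> (nat \<Rightarrow> nat) set \<Rightarrow> (nat \<Rightarrow> nat) \<Rightarrow> complex" where
  "rec_r N d E S x = (\<Sum>m\<in>ZNd N d - S. chi N (dotN N d x m) * fourier_indic N d E m)"

definition round_G :: "nat \<Rightarrow> nat \<Rightarrow> (nat \<Rightarrow> nat) set \<Rightarrow> (nat \<Rightarrow> nat) set \<Rightarrow> (nat \<Rightarrow> nat) \<Rightarrow> complex" where
  "round_G N d E S x = (if cmod (rec_r N d E S x) \<ge> 1/2 then 1 else 0)"

end

theory Submission
  imports Defs
begin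

text \<open>Summing the inversion formula over all frequencies gives \<open>1\<^sub>E\<close> exactly, so \<open>r\<close> differs
  from \<open>1\<^sub>E\<close> only by the omitted terms \<open>m \<in> S\<close>. Each Fourier coefficient of \<open>1\<^sub>E\<close> has
  modulus at most \<open>|E|/N\<^sup>d\<close>, so \<open>|r x - 1\<^sub>E x| \<le> |E||S|/N\<^sup>d < 1/4\<close>, and rounding
  at \<open>1/2\<close> recovers \<open>1\<^sub>E\<close> (any error below \<open>1/2\<close> would do). Orthogonality of the
  characters follows because translating the frequency by a unit vector \<open>e\<^sub>j\<close> multiplies
  \<open>\<Sum>\<^sub>m \<chi>((x - y)\<cdot>m)\<close> by \<open>\<chi>(x\<^sub>j - y\<^sub>j) \<noteq> 1\<close> whenever \<open>x\<^sub>j \<noteq> y\<^sub>j\<close>.\<close>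

lemma chi_add: "chi N (a + b) = chi N a * chi N b"
  unfolding chi_def by (simp add: distrib_left add_divide_distrib exp_add)

lemma chi_zero [simp]: "chi N 0 = 1"
  by (simp add: chi_def)

lemma chi_multiple: "chi N (int N * k) = 1"
proof (cases "N = 0")
  case False
  then have "2 * pi * \<i> * of_int (int N * k) / of_nat N = \<i> * (of_int k * (of_real pi * 2))"
    by (simp add: field_simps)
  then show ?thesis unfolding chi_def by simp
qed (simp add: chi_def)

lemma chi_cong:
  assumes "a mod int N = b mod int N"
  shows "chi N a = chi N b"
proof -
  have "int N dvd a - b"
    using assms by (simp add: mod_eq_dvd_iff)
  then obtain k where "a - b = int N * k" ..
  then have "a = b + int N * k" by simp
  then show ?thesis by (simp add: chi_add chi_multiple)
qed

lemma norm_chi [simp]: "norm (chi N t) = 1"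
proof -
  have "2 * pi * \<i> * of_int t / of_nat N = \<i> * complex_of_real (2 * pi * t / N)" by simp
  then show ?thesis unfolding chi_def by (simp only:) (rule norm_exp_i_times)
qed

lemma chi_eq_1_imp_dvd:
  assumes "N > 0" and "chi N t = 1"
  shows "int N dvd t"
proof -
  from assms(2) obtain n :: int where "Im (2 * pi * \<i> * of_int t / of_nat N) = of_int (2 * n) * pi"
    unfolding chi_def exp_eq_1 by blast
  then have "real_of_int t = real_of_int (n * int N)"
    using assms(1) by (simp add: field_simps)
  then have "t = n * int N" by (simp only: of_int_eq_iff)
  then show ?thesis by simp
qed

text \<open>\<open>(x - y)\<cdot>m\<close> computed in \<open>\<int>\<close> without reduction; \<open>\<chi>\<close> only depends on it mod \<open>N\<close>.\<close>
definition dot_diff :: "nat \<Rightarrow> (nat \<Rightarrow> nat) \<Rightarrow> (nat \<Rightarrow> nat) \<Rightarrow> (nat \<Rightarrow> nat) \<Rightarrow> int" where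
  "dot_diff d x y m = (\<Sum>i<d. (int (x i) - int (y i)) * int (m i))"

lemma chi_dotN_mult_conj:
  "chi N (dotN N d x m) * chi N (- dotN N d y m) = chi N (dot_diff d x y m)"
proof -
  have "int (\<Sum>i<d. x i * m i) - int (\<Sum>i<d. y i * m i) = dot_diff d x y m"
    unfolding dot_diff_def by (simp add: sum_subtractf left_diff_distrib)
  then have "(dotN N d x m - dotN N d y m) mod int N = dot_diff d x y m mod int N"
    unfolding dotN_def by (simp add: zmod_int mod_diff_eq)
  then have "chi N (dotN N d x m - dotN N d y m) = chi N (dot_diff d x y m)"
    by (rule chi_cong)
  then show ?thesis
    by (simp add: chi_add[symmetric])
qed

lemma dot_diff_upd:
  assumes "j < d"
  shows "dot_diff d x y (m(j := t))
    = dot_diff d x y m + (int (x j) - int (y j)) * (int t - int (m j))"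
proof -
  let ?c = "(int (x j) - int (y j)) * (int t - int (m j))"
  have "dot_diff d x y (m(j := t))
      = (\<Sum>i<d. (int (x i) - int (y i)) * int (m i) + (if i = j then ?c else 0))"
    unfolding dot_diff_def by (rule sum.cong) (simp_all add: right_diff_distrib)
  also have "\<dots> = dot_diff d x y m + ?c"
    using assms by (simp only: sum.distrib dot_diff_def sum.delta finite_lessThan lessThan_iff if_True)
  finally show ?thesis .
qed

lemma sum_eq_0_if_scaled_by_bij:
  fixes f :: "'a \<Rightarrow> 'b :: field"
  assumes "bij_betw g A A" and "\<And>a. a \<in> A \<Longrightarrow> f (g a) = c * f a" and "c \<noteq> 1"
  shows "sum f A = 0"
proof -
  have "sum f A = sum (f \<circ> g) A"
    using sum.reindex_bij_betw[OF assms(1), of f] by (simp add: comp_def)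
  also have "\<dots> = c * sum f A"
    using assms(2) by (simp add: sum_distrib_left)
  finally have "(1 - c) * sum f A = 0" by (simp add: algebra_simps)
  then show ?thesis using assms(3) by simp
qed

definition shift :: "nat \<Rightarrow> nat \<Rightarrow> (nat \<Rightarrow> nat) \<Rightarrow> nat \<Rightarrow> nat" where
  "shift N j m = m(j := Suc (m j) mod N)"

lemma bij_ZNd: "bij_betw (\<lambda>f. restrict f {..<d}) (ZNd N d) (PiE {..<d} (\<lambda>_. {..<N}))"
proof (rule bij_betwI[where g = "\<lambda>f i. if i < d then f i else 0"])
  show "(\<lambda>f. restrict f {..<d}) \<in> ZNd N d \<rightarrow> PiE {..<d} (\<lambda>_. {..<N})"
    by (auto simp: ZNd_def)
  show "(\<lambda>f i. if i < d then f i else 0) \<in> PiE {..<d} (\<lambda>_. {..<N}) \<rightarrow> ZNd N d"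
    by (auto simp: ZNd_def PiE_def Pi_def)
qed (auto simp: ZNd_def PiE_def extensional_def fun_eq_iff)

lemma card_ZNd: "card (ZNd N d) = N ^ d"
  using bij_betw_same_card[OF bij_ZNd] by (simp add: card_PiE)

lemma finite_ZNd: "finite (ZNd N d)"
  using bij_betw_finite[OF bij_ZNd] by (simp add: finite_PiE)

lemma bij_betw_shift:
  assumes "N > 0" and "j < d"
  shows "bij_betw (shift N j) (ZNd N d) (ZNd N d)"
proof -
  have into: "shift N j ` ZNd N d \<subseteq> ZNd N d"
    using assms by (auto simp: shift_def ZNd_def)
  have "inj_on (shift N j) (ZNd N d)"
  proof (rule inj_onI)
    fix a b assume a: "a \<in> ZNd N d" and b: "b \<in> ZNd N d" and eq: "shift N j a = shift N j b"
    have "Suc (a j) mod N = Suc (b j) mod N"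
      using fun_cong[OF eq, of j] by (simp add: shift_def)
    moreover have "a j < N" "b j < N"
      using a b assms(2) by (auto simp: ZNd_def)
    ultimately have "a j = b j"
      by (auto simp: mod_Suc split: if_splits)
    show "a = b"
    proof
      fix i show "a i = b i"
        using fun_cong[OF eq, of i] \<open>a j = b j\<close> by (cases "i = j") (simp_all add: shift_def)
    qed
  qed
  then show ?thesis
    using endo_inj_surj[OF finite_ZNd into] into by (simp add: bij_betw_def)
qed

lemma chi_dot_diff_shift:
  assumes "j < d"
  shows "chi N (dot_diff d x y (shift N j m))
    = chi N (int (x j) - int (y j)) * chi N (dot_diff d x y m)"
proof -
  let ?z = "int (x j) - int (y j)" and ?D = "dot_diff d x y m"
  let ?step = "int (Suc (m j) mod N) - int (m j)"
  have step: "?step mod int N = 1 mod int N"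
    by (simp add: zmod_int mod_diff_left_eq)
  have "dot_diff d x y (shift N j m) mod int N = (?D + ?z * ?step) mod int N"
    unfolding shift_def dot_diff_upd[OF assms] ..
  also have "\<dots> = (?D + (?z * (?step mod int N)) mod int N) mod int N"
    by (simp add: mod_add_right_eq mod_mult_right_eq)
  also have "\<dots> = (?z + ?D) mod int N"
    unfolding step by (simp add: mod_add_right_eq mod_mult_right_eq add.commute)
  finally have "chi N (dot_diff d x y (shift N j m)) = chi N (?z + ?D)"
    by (rule chi_cong)
  then show ?thesis
    by (simp add: chi_add)
qed

lemma chi_ne_1:
  assumes "a < N" and "b < N" and "a \<noteq> b"
  shows "chi N (int a - int b) \<noteq> 1"
proof
  assume "chi N (int a - int b) = 1"
  then have "int N dvd int a - int b"
    using assms(1) by (intro chi_eq_1_imp_dvd) auto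
  then have "\<bar>int N\<bar> \<le> \<bar>int a - int b\<bar>"
    using assms(3) by (intro dvd_imp_le_int) auto
  with assms(1,2) show False by linarith
qed

lemma sum_chi_dot_diff:
  assumes N: "N > 0" and x: "x \<in> ZNd N d" and y: "y \<in> ZNd N d"
  shows "(\<Sum>m\<in>ZNd N d. chi N (dot_diff d x y m)) = (if x = y then of_nat N ^ d else 0)"
proof (cases "x = y")
  case True
  then show ?thesis by (simp add: dot_diff_def card_ZNd)
next
  case False
  then obtain j where j: "x j \<noteq> y j" by (auto simp: fun_eq_iff)
  have "j < d"
  proof (rule ccontr)
    assume "\<not> j < d"
    with x y j show False by (simp add: ZNd_def)
  qed
  with x y have "x j < N" "y j < N" by (simp_all add: ZNd_def)
  have "(\<Sum>m\<in>ZNd N d. chi N (dot_diff d x y m)) = 0"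
  proof (rule sum_eq_0_if_scaled_by_bij[OF bij_betw_shift[OF N \<open>j < d\<close>],
        where c = "chi N (int (x j) - int (y j))"])
    show "chi N (dot_diff d x y (shift N j m))
        = chi N (int (x j) - int (y j)) * chi N (dot_diff d x y m)" for m
      by (rule chi_dot_diff_shift[OF \<open>j < d\<close>])
    show "chi N (int (x j) - int (y j)) \<noteq> 1"
      by (rule chi_ne_1) fact+
  qed
  with False show ?thesis by simp
qed

lemma fourier_inversion:
  assumes N: "N > 0" and E: "E \<subseteq> ZNd N d" and x: "x \<in> ZNd N d"
  shows "(\<Sum>m\<in>ZNd N d. chi N (dotN N d x m) * fourier_indic N d E m) = indic E x"
proof -
  let ?c = "1 / (of_nat N ^ d :: complex)"
  have "(\<Sum>m\<in>ZNd N d. chi N (dotN N d x m) * fourier_indic N d E m)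
      = ?c * (\<Sum>m\<in>ZNd N d. \<Sum>y\<in>E. chi N (dotN N d x m) * chi N (- dotN N d y m))"
    unfolding fourier_indic_def by (simp add: sum_distrib_left sum_distrib_right mult_ac)
  also have "\<dots> = ?c * (\<Sum>y\<in>E. \<Sum>m\<in>ZNd N d. chi N (dot_diff d x y m))"
    by (simp add: chi_dotN_mult_conj sum.swap[of _ "ZNd N d"])
  also have "\<dots> = ?c * (\<Sum>y\<in>E. if x = y then of_nat N ^ d else 0)"
    using E by (simp add: sum_chi_dot_diff[OF N x] subset_iff)
  also have "\<dots> = indic E x"
    using finite_subset[OF E finite_ZNd] N by (simp add: indic_def)
  finally show ?thesis .
qed

lemma norm_fourier_indic_le: "norm (fourier_indic N d E m) \<le> real (card E) / real N ^ d"
proof -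
  have "norm (fourier_indic N d E m) = norm (\<Sum>x\<in>E. chi N (- dotN N d x m)) / real N ^ d"
    unfolding fourier_indic_def by (simp add: norm_mult norm_divide norm_power)
  also have "\<dots> \<le> (\<Sum>x\<in>E. norm (chi N (- dotN N d x m))) / real N ^ d"
    by (intro divide_right_mono norm_sum) auto
  finally show ?thesis by simp
qed

lemma norm_rec_r_minus_indic_le:
  assumes N: "N > 0" and E: "E \<subseteq> ZNd N d" and S: "S \<subseteq> ZNd N d" and x: "x \<in> ZNd N d"
  shows "norm (rec_r N d E S x - indic E x) \<le> real (card S) * real (card E) / real N ^ d"
proof -
  let ?f = "\<lambda>m. chi N (dotN N d x m) * fourier_indic N d E m"
  have "rec_r N d E S x - indic E x = - (\<Sum>m\<in>S. ?f m)"
    unfolding rec_r_def fourier_inversion[OF N E x, symmetric]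
    using sum_diff[OF finite_ZNd S, of ?f] by simp
  then have "norm (rec_r N d E S x - indic E x) \<le> (\<Sum>m\<in>S. norm (?f m))"
    by (simp add: norm_sum)
  also have "\<dots> \<le> (\<Sum>m\<in>S. real (card E) / real N ^ d)"
    by (intro sum_mono) (simp add: norm_mult norm_fourier_indic_le)
  finally show ?thesis by simp
qed

lemma round_G_eq_indic:
  assumes "norm (rec_r N d E S x - indic E x) < 1 / 2"
  shows "round_G N d E S x = indic E x"
proof (cases "x \<in> E")
  case True
  then have "1 / 2 < norm (rec_r N d E S x)"
    using assms norm_triangle_ineq3[of 1 "rec_r N d E S x"] by (simp add: indic_def norm_minus_commute)
  with True show ?thesis by (simp add: round_G_def indic_def)
next
  case False
  with assms show ?thesis by (simp add: round_G_def indic_def)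
qed

theorem theorem4:
  fixes N d :: nat and E S :: "(nat \<Rightarrow> nat) set"
  assumes "N \<ge> 2" and "d \<ge> 1"
    and "E \<subseteq> ZNd N d" and "S \<subseteq> ZNd N d"
    and "real (card E) * real (card S) < real N ^ d / 4"
  shows "\<forall>x\<in>ZNd N d. round_G N d E S x = indic E x"
proof
  fix x assume x: "x \<in> ZNd N d"
  have N: "N > 0" using assms(1) by simp
  have "real (card S) * real (card E) / real N ^ d < 1 / 4"
    using assms(5) N by (simp add: field_simps)
  then have "norm (rec_r N d E S x - indic E x) < 1 / 2"
    using norm_rec_r_minus_indic_le[OF N assms(3,4) x] by linarith
  then show "round_G N d E S x = indic E x"
    by (rule round_G_eq_indic)
qed

end
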